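(* Consider the two-species symmetric simple exclusion process on $\mathbb{Z}$ (i.e. $p=q=1/2$) with $N-1$ first-class particles and one second-class particle, started from integer positions $y_1<\cdots<y_N$ where the particle at $y_N$ is the second-class particle. Let $\eta(t)$ be the position of the second-class particle at time $t\ge0$. Then for every $x\in\mathbb{Z}$, \[ \mathbb{P}(\eta(t)=x)=\frac{1}{2\pi i}\oint_c \xi^{x-y_N-1}e^{\left(\frac{1}{2\xi}+\frac{\xi}{2}-1\right)t}\,d\xi, \] where $c$ is a counterclockwise circle centered at the origin of small radius.
   Context: Dynamics: each particle independently waits an exponential time with parameter $1$, then attempts to jump one step to the right or to the left, each with probability $1/2$. A jump to an empty site is performed; a first-class particle attempting to jump onto the site of the second-class particle exchanges positions with it; all other jumps onto occupied sites are suppressed. *)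

theory Defs
  imports "HOL-Probability.Probability" "HOL-Complex_Analysis.Complex_Analysis"
begin

text \<open>Configuration of the two-species exclusion process on the integers:
  the (finite) set of sites occupied by first-class particles, and the site
  of the second-class particle.\<close>
type_synonym config = "int set \<times> int"

definition step :: "config \<Rightarrow> int \<Rightarrow> int \<Rightarrow> config" where
  "step c z d = (let A = fst c; s = snd c in
     if z \<in> A then
       (if z + d = s then (insert s (A - {z}), z)
        else if z + d \<in> A then (A, s)
        else (insert (z + d) (A - {z}), s))
     else if z = s then
       (if z + d \<in> A then (A, s) else (A, z + d))
     else (A, s))"

definition jump_kernel :: "config \<Rightarrow> config pmf" where
  "jump_kernel c =
     pmf_of_set (insert (snd c) (fst c)) \<bind>
       (\<lambda>z. pmf_of_set {-1, 1::int} \<bind> (\<lambda>d. return_pmf (step c z d)))"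

primrec n_steps :: "nat \<Rightarrow> config \<Rightarrow> config pmf" where
  "n_steps 0 c = return_pmf c"
| "n_steps (Suc n) c = n_steps n c \<bind> jump_kernel"

text \<open>Law at time t of the continuous-time process (every particle carries a
  rate-1 exponential clock), via uniformization: with N particles the total
  clock rate is N, so the number of attempted jumps by time t is Poisson(N t).\<close>
definition proc_prob :: "real \<Rightarrow> config \<Rightarrow> (config \<Rightarrow> bool) \<Rightarrow> real" where
  "proc_prob t c P =
     (let N = real (card (fst c) + 1) in
      (\<Sum>n. exp (- N * t) * (N * t) ^ n / fact n *
             measure_pmf.prob (n_steps n c) {c'. P c'}))"

end

theory Submission
  imports Defs
begin

text \<open>
  The second-class particle performs a lazy simple random walk. Of the \<open>2 N\<close> equally likely jump
  attempts of the uniformized chain exactly one moves it to a given neighbour: its own jump if that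
  site is empty, and otherwise the swap with the first-class particle sitting there. So after \<open>n\<close>
  attempts its displacement has generating function \<open>\<phi>(\<xi>)^n\<close> with
  \<open>\<phi>(\<xi>) = 1 - 1/N + (\<xi> + 1/\<xi>)/(2 N)\<close>, and the probability of displacement \<open>k\<close> is the residue
  of \<open>\<xi>^(k-1) \<phi>(\<xi>)^n\<close> at \<open>0\<close>. Averaging over the Poisson\<open>(N t)\<close> number of attempts turns
  \<open>\<phi>^n\<close> into \<open>exp (N t (\<phi> - 1)) = exp ((1/(2\<xi>) + \<xi>/2 - 1) t)\<close>; the Poisson series converges
  uniformly on every circle around \<open>0\<close>, so it may be integrated termwise, and the formula in fact
  holds for every radius.
\<close>

lemma has_contour_integral_circlepath_powi:
  assumes "r > 0"
  shows "((\<lambda>\<xi>::complex. \<xi> powi m) has_contour_integral (if m = -1 then 2 * pi * \<i> else 0))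
           (circlepath 0 r)"
proof (cases "m = -1")
  case True
  have "((\<lambda>w. 1 / (w - 0)) has_contour_integral (2 * pi * \<i> * winding_number (circlepath 0 r) 0))
          (circlepath 0 r)"
    by (rule has_contour_integral_winding_number) (use assms in auto)
  moreover have "(\<lambda>w::complex. 1 / (w - 0)) = (\<lambda>w. w powi m)"
    using True by (auto simp: power_int_minus divide_inverse)
  ultimately show ?thesis
    using True winding_number_circlepath_centre[OF assms] by simp
next
  case False
  then have nz: "complex_of_int (m + 1) \<noteq> 0"
    unfolding of_int_eq_0_iff by linarith
  have "((\<lambda>\<xi>. \<xi> powi m) has_contour_integral 0) (circlepath 0 r)"
  proof (rule Cauchy_theorem_primitive[where S = "-{0}" and f = "\<lambda>\<xi>. \<xi> powi (m + 1) / of_int (m + 1)"])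
    fix w :: complex
    assume "w \<in> -{0}"
    then have "((\<lambda>\<xi>. \<xi> powi (m + 1) / of_int (m + 1)) has_field_derivative
        (of_int (m + 1) * w powi (m + 1 - 1) * 1) / of_int (m + 1)) (at w within -{0})"
      using nz by (intro derivative_eq_intros) auto
    then show "((\<lambda>\<xi>. \<xi> powi (m + 1) / of_int (m + 1)) has_field_derivative w powi m) (at w within -{0})"
      using nz by simp
  qed (use assms in auto)
  then show ?thesis
    using False by simp
qed

lemma has_contour_integral_suminf_circlepath:
  assumes "0 < r"
    and "\<And>i. (f i has_contour_integral I i) (circlepath z r)"
    and "\<And>i w. w \<in> sphere z r \<Longrightarrow> norm (f i w) \<le> M i"
    and "summable M"
  shows "((\<lambda>w. \<Sum>i. f i w) has_contour_integral (\<Sum>i. I i)) (circlepath z r)"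
proof -
  have partial: "((\<lambda>w. \<Sum>i<n. f i w) has_contour_integral (\<Sum>i<n. I i)) (circlepath z r)" for n
    by (intro has_contour_integral_sum) (auto intro: assms(2))
  have unif: "uniform_limit (sphere z r) (\<lambda>n w. \<Sum>i<n. f i w) (\<lambda>w. \<Sum>i. f i w) sequentially"
    using assms(3,4) by (rule Weierstrass_m_test)
  have "eventually (\<lambda>n. (\<lambda>w. \<Sum>i<n. f i w) contour_integrable_on circlepath z r) sequentially"
    using partial has_contour_integral_integrable by (intro always_eventually allI) blast
  note lim = contour_integral_uniform_limit_circlepath[OF this unif trivial_limit_sequentially assms(1)]
  have "I sums contour_integral (circlepath z r) (\<lambda>w. \<Sum>i. f i w)"
    using lim(2) unfolding sums_def by (simp add: contour_integral_unique[OF partial])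
  then show ?thesis
    using has_contour_integral_integral[OF lim(1)] by (simp add: sums_unique[symmetric])
qed

lemma poisson_generating_function:
  fixes z :: "'a :: {real_normed_field, banach}"
  shows "(\<lambda>n. of_real (exp (- a) * a ^ n / fact n) * z ^ n) sums exp (of_real a * (z - 1))"
proof -
  have "(\<lambda>n. of_real (exp (- a)) * ((of_real a * z) ^ n /\<^sub>R fact n)) sums
          (of_real (exp (- a)) * exp (of_real a * z))"
    by (intro sums_mult exp_converges)
  moreover have "of_real (exp (- a)) * exp (of_real a * z) = exp (of_real a * (z - 1))"
    by (simp add: exp_of_real [symmetric] exp_add [symmetric] algebra_simps)
  ultimately show ?thesis
    by (simp add: scaleR_conv_of_real field_simps)
qed

definition valid_config :: "nat \<Rightarrow> config \<Rightarrow> bool" where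
  "valid_config N c \<longleftrightarrow> finite (fst c) \<and> snd c \<notin> fst c \<and> card (fst c) + 1 = N"

lemma valid_config_step:
  assumes "valid_config N (A, s)" "z \<in> insert s A" "d \<in> {-1, 1}"
  shows "valid_config N (step (A, s) z d)"
proof -
  have card_swap: "card (insert u (A - {z})) = card A" if "z \<in> A" "u \<notin> A - {z}" for u
  proof -
    have "finite A"
      using assms(1) by (simp add: valid_config_def)
    then have "card A > 0"
      using that(1) by (auto simp: card_gt_0_iff)
    then show ?thesis
      using \<open>finite A\<close> that by (simp add: card_Diff_singleton)
  qed
  show ?thesis
    using assms card_swap[of s] card_swap[of "z + d"]
    by (auto simp: valid_config_def step_def Let_def)
qed

lemma valid_config_jump_kernel:
  assumes "valid_config N c" "c' \<in> set_pmf (jump_kernel c)"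
  shows "valid_config N c'"
proof -
  obtain A s where c: "c = (A, s)"
    by (cases c)
  then have "finite A"
    using assms(1) by (simp add: valid_config_def)
  then show ?thesis
    using assms valid_config_step by (auto simp: c jump_kernel_def)
qed

lemma valid_config_n_steps:
  assumes "valid_config N c"
  shows "c' \<in> set_pmf (n_steps n c) \<Longrightarrow> valid_config N c'"
proof (induction n arbitrary: c')
  case 0
  then show ?case
    using assms by simp
next
  case (Suc n)
  then obtain c1 where "c1 \<in> set_pmf (n_steps n c)" "c' \<in> set_pmf (jump_kernel c1)"
    by auto
  then show ?case
    using Suc.IH valid_config_jump_kernel by blast
qed

lemma snd_step_range:
  assumes "d \<in> {-1, 1}"
  shows "snd (step (A, s) z d) \<in> {s - 1, s, s + 1}"
  using assms by (auto simp: step_def Let_def)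

lemma snd_step_eq_neighbour_iff:
  assumes "s \<notin> A" "z \<in> insert s A" "d \<in> {-1, 1}" "e \<in> {-1, 1}"
  shows "snd (step (A, s) z d) = s + e \<longleftrightarrow> (z, d) = (if s + e \<in> A then (s + e, - e) else (s, e))"
  using assms by (auto simp: step_def Let_def)

lemma pmf_snd_jump_kernel_card:
  assumes "finite A" "s \<notin> A"
  shows "pmf (map_pmf snd (jump_kernel (A, s))) y =
    card {(z, d) \<in> insert s A \<times> {-1, 1}. snd (step (A, s) z d) = y} / (2 * (card A + 1))"
proof -
  have attempts: "pmf (pmf_of_set {-1, 1} \<bind> (\<lambda>d. return_pmf (snd (step (A, s) z d)))) y =
      (\<Sum>d\<in>{-1, 1::int}. of_bool (snd (step (A, s) z d) = y)) / 2" for z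
    by (simp add: pmf_bind_pmf_of_set indicator_def)
  have "pmf (map_pmf snd (jump_kernel (A, s))) y =
      (\<Sum>z\<in>insert s A. \<Sum>d\<in>{-1, 1::int}. of_bool (snd (step (A, s) z d) = y)) / 2 / (card A + 1)"
    using assms
    by (simp add: jump_kernel_def map_bind_pmf pmf_bind_pmf_of_set attempts flip: sum_divide_distrib)
  also have "(\<Sum>z\<in>insert s A. \<Sum>d\<in>{-1, 1::int}. of_bool (snd (step (A, s) z d) = y)) =
      real (card {(z, d) \<in> insert s A \<times> {-1, 1}. snd (step (A, s) z d) = y})"
  proof -
    have "{(z, d) \<in> insert s A \<times> {-1, 1}. snd (step (A, s) z d) = y} =
        (insert s A \<times> {-1, 1}) \<inter> {(z, d). snd (step (A, s) z d) = y}"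
      by auto
    then show ?thesis
      using assms by (simp only: sum.cartesian_product) (simp add: case_prod_unfold)
  qed
  finally show ?thesis
    by simp
qed

lemma pmf_snd_jump_kernel:
  assumes "valid_config N c"
  shows "pmf (map_pmf snd (jump_kernel c)) y =
    (1 - 1 / real N) * indicator {y} (snd c)
      + (indicator {y + 1} (snd c) + indicator {y - 1} (snd c)) / (2 * real N)"
proof -
  obtain A s where c: "c = (A, s)"
    by (cases c)
  have A: "finite A" "s \<notin> A" and N: "N = card A + 1"
    using assms by (auto simp: c valid_config_def)
  have neighbour: "pmf (map_pmf snd (jump_kernel c)) (s + e) = 1 / (2 * N)" if e: "e \<in> {-1, 1}" for e
  proof -
    have "{(z, d) \<in> insert s A \<times> {-1, 1}. snd (step (A, s) z d) = s + e} =
        {if s + e \<in> A then (s + e, - e) else (s, e)}"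
      using snd_step_eq_neighbour_iff[OF A(2) _ _ e] e by auto
    then show ?thesis
      using A by (simp add: c N pmf_snd_jump_kernel_card)
  qed
  have support: "set_pmf (map_pmf snd (jump_kernel c)) \<subseteq> {s - 1, s, s + 1}"
    using A snd_step_range[of _ A s] by (fastforce simp: c jump_kernel_def)
  have "(\<Sum>y\<in>{s - 1, s, s + 1}. pmf (map_pmf snd (jump_kernel c)) y) = 1"
    using support by (rule sum_pmf_eq_1[rotated]) simp
  then have centre: "pmf (map_pmf snd (jump_kernel c)) s = 1 - 1 / N"
    using neighbour[of "-1"] neighbour[of 1] by (simp add: field_simps)
  consider "y = s" | "y = s - 1" | "y = s + 1" | "y \<notin> {s - 1, s, s + 1}"
    by blast
  then show ?thesis
  proof cases
    case 1
    then show ?thesis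
      using centre by (simp add: c)
  next
    case 2
    then show ?thesis
      using neighbour[of "-1"] by (simp add: c)
  next
    case 3
    then show ?thesis
      using neighbour[of 1] by (simp add: c)
  next
    case 4
    then show ?thesis
      using support by (auto simp: c set_pmf_eq)
  qed
qed

definition second_class_pmf :: "config \<Rightarrow> nat \<Rightarrow> int \<Rightarrow> real" where
  "second_class_pmf c n = pmf (map_pmf snd (n_steps n c))"

lemma second_class_pmf_0: "second_class_pmf c 0 x = of_bool (x = snd c)"
  by (simp add: second_class_pmf_def)

lemma second_class_pmf_Suc:
  assumes "valid_config N c"
  shows "second_class_pmf c (Suc n) x = (1 - 1 / real N) * second_class_pmf c n x
           + (second_class_pmf c n (x + 1) + second_class_pmf c n (x - 1)) / (2 * real N)"
proof -
  let ?p = "n_steps n c"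
  define h where
    "h s = (1 - 1 / real N) * indicator {x} s + (indicator {x + 1} s + indicator {x - 1} s) / (2 * real N)"
    for s :: int
  have "second_class_pmf c (Suc n) x = measure_pmf.expectation ?p (\<lambda>c'. pmf (map_pmf snd (jump_kernel c')) x)"
    by (simp add: second_class_pmf_def map_bind_pmf pmf_bind)
  also have "\<dots> = measure_pmf.expectation ?p (\<lambda>c'. h (snd c'))"
    using valid_config_n_steps[OF assms]
    by (intro integral_cong_AE) (auto simp: AE_measure_pmf_iff pmf_snd_jump_kernel h_def)
  also have "\<dots> = measure_pmf.expectation (map_pmf snd ?p) h"
    by simp
  also have "\<dots> = (1 - 1 / real N) * second_class_pmf c n x
           + (second_class_pmf c n (x + 1) + second_class_pmf c n (x - 1)) / (2 * real N)"
    unfolding h_def second_class_pmf_def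
    by (simp add: measure_pmf.integrable_const_bound[where B = 1] measure_pmf_single del: integral_map_pmf)
  finally show ?thesis .
qed

definition walk_symbol :: "nat \<Rightarrow> complex \<Rightarrow> complex" where
  "walk_symbol N \<xi> = 1 - 1 / of_nat N + (\<xi> + 1 / \<xi>) / (2 * of_nat N)"

lemma norm_walk_symbol_le:
  assumes "N \<ge> 1"
  shows "norm (walk_symbol N \<xi>) \<le> 1 - 1 / N + (norm \<xi> + 1 / norm \<xi>) / (2 * N)"
proof -
  have "walk_symbol N \<xi> = of_real (1 - 1 / N) + (\<xi> + 1 / \<xi>) / of_real (2 * N)"
    by (simp add: walk_symbol_def)
  then have "norm (walk_symbol N \<xi>) \<le>
      norm (of_real (1 - 1 / N) :: complex) + norm (\<xi> + 1 / \<xi>) / (2 * N)"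
    by (metis norm_triangle_ineq norm_divide norm_of_real abs_of_nonneg of_nat_0_le_iff)
  also have "norm (of_real (1 - 1 / N) :: complex) = 1 - 1 / N"
    using assms by (subst norm_of_real) (simp add: field_simps)
  also have "norm (\<xi> + 1 / \<xi>) \<le> norm \<xi> + 1 / norm \<xi>"
    using norm_triangle_ineq[of \<xi> "1 / \<xi>"] by (simp add: norm_divide)
  finally show ?thesis
    using assms by (simp add: divide_right_mono)
qed

lemma has_contour_integral_walk_symbol_power:
  assumes "valid_config N c" "r > 0"
  shows "((\<lambda>\<xi>. \<xi> powi (k - 1) * walk_symbol N \<xi> ^ n) has_contour_integral
           2 * pi * \<i> * second_class_pmf c n (snd c + k)) (circlepath 0 r)"
proof (induction n arbitrary: k)
  case 0
  have "2 * pi * \<i> * second_class_pmf c 0 (snd c + k) = (if k - 1 = -1 then 2 * pi * \<i> else 0)"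
    by (simp add: second_class_pmf_0)
  then show ?case
    unfolding power_0 mult_1_right by (simp only: has_contour_integral_circlepath_powi[OF assms(2)])
next
  case (Suc n)
  have "N \<noteq> 0"
    using assms(1) by (simp add: valid_config_def)
  define a :: complex where "a = 1 - 1 / of_nat N"
  define b :: complex where "b = 1 / (2 * of_nat N)"
  have "((\<lambda>\<xi>. a * (\<xi> powi (k - 1) * walk_symbol N \<xi> ^ n) + b * (\<xi> powi (k + 1 - 1) * walk_symbol N \<xi> ^ n)
            + b * (\<xi> powi (k - 1 - 1) * walk_symbol N \<xi> ^ n)) has_contour_integral
       a * (2 * pi * \<i> * second_class_pmf c n (snd c + k))
       + b * (2 * pi * \<i> * second_class_pmf c n (snd c + (k + 1)))
       + b * (2 * pi * \<i> * second_class_pmf c n (snd c + (k - 1)))) (circlepath 0 r)"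
    by (intro has_contour_integral_add has_contour_integral_lmul Suc.IH)
  also have "a * (2 * pi * \<i> * second_class_pmf c n (snd c + k))
       + b * (2 * pi * \<i> * second_class_pmf c n (snd c + (k + 1)))
       + b * (2 * pi * \<i> * second_class_pmf c n (snd c + (k - 1))) =
       2 * pi * \<i> * second_class_pmf c (Suc n) (snd c + k)"
    using \<open>N \<noteq> 0\<close> unfolding second_class_pmf_Suc[OF assms(1)] a_def b_def
    by (simp add: field_simps)
  finally show ?case
  proof (rule has_contour_integral_eq)
    fix \<xi> :: complex
    assume "\<xi> \<in> path_image (circlepath 0 r)"
    then have "\<xi> \<noteq> 0"
      using assms(2) by auto
    have shift: "\<xi> powi (k + 1 - 1) = \<xi> powi (k - 1) * \<xi>" "\<xi> powi (k - 1 - 1) = \<xi> powi (k - 1) / \<xi>"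
      using power_int_add_1[of \<xi> "k - 1"] power_int_diff[of \<xi> "k - 1" 1] \<open>\<xi> \<noteq> 0\<close> by simp_all
    have symbol: "walk_symbol N \<xi> = a + b * \<xi> + b / \<xi>"
      using \<open>N \<noteq> 0\<close> by (simp add: walk_symbol_def a_def b_def field_simps)
    show "a * (\<xi> powi (k - 1) * walk_symbol N \<xi> ^ n) + b * (\<xi> powi (k + 1 - 1) * walk_symbol N \<xi> ^ n)
            + b * (\<xi> powi (k - 1 - 1) * walk_symbol N \<xi> ^ n) = \<xi> powi (k - 1) * walk_symbol N \<xi> ^ Suc n"
      unfolding shift power_Suc symbol using \<open>\<xi> \<noteq> 0\<close> by (simp add: field_simps)
  qed
qed

lemma has_contour_integral_second_class_law:
  assumes valid: "valid_config N c" and "t \<ge> 0" "r > 0"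
  shows "((\<lambda>\<xi>. \<xi> powi (x - snd c - 1) * exp ((1 / (2 * \<xi>) + \<xi> / 2 - 1) * complex_of_real t))
           has_contour_integral 2 * pi * \<i> * proc_prob t c (\<lambda>c'. snd c' = x)) (circlepath 0 r)"
proof -
  define k where "k = x - snd c"
  define a where "a = real N * t"
  define w where "w n = exp (- a) * a ^ n / fact n" for n
  define f where "f n \<xi> = of_real (w n) * (\<xi> powi (k - 1) * walk_symbol N \<xi> ^ n)" for n \<xi>
  define B where "B = 1 - 1 / N + (r + 1 / r) / (2 * N)"
  have "N \<ge> 1"
    using valid by (auto simp: valid_config_def)
  have w_nonneg: "w n \<ge> 0" for n
    using assms(2) by (simp add: w_def a_def)
  have "w sums 1"
    using poisson_generating_function[of a "1 :: real"] unfolding w_def[abs_def] by simp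
  then have law_summable: "summable (\<lambda>n. w n * second_class_pmf c n x)"
    by (rule summable_comparison_test'[OF sums_summable])
      (simp add: second_class_pmf_def w_nonneg abs_mult mult_left_le pmf_le_1)
  have proc: "proc_prob t c (\<lambda>c'. snd c' = x) = (\<Sum>n. w n * second_class_pmf c n x)"
    using valid
    by (simp add: proc_prob_def Let_def valid_config_def w_def a_def second_class_pmf_def pmf_map vimage_def)
  have terms: "(f n has_contour_integral 2 * pi * \<i> * of_real (w n * second_class_pmf c n x))
      (circlepath 0 r)" for n
    using has_contour_integral_lmul[OF has_contour_integral_walk_symbol_power[OF valid assms(3)],
        of "of_real (w n)" k n]
    unfolding f_def[abs_def] by (simp add: k_def mult_ac)
  have bound: "norm (f n \<xi>) \<le> r powi (k - 1) * (w n * B ^ n)" if "\<xi> \<in> sphere 0 r" for n \<xi>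
  proof -
    have "norm \<xi> = r"
      using that by simp
    then have "norm (walk_symbol N \<xi>) \<le> B"
      using norm_walk_symbol_le[OF \<open>N \<ge> 1\<close>, of \<xi>] by (simp add: B_def)
    then have "r powi (k - 1) * (w n * norm (walk_symbol N \<xi>) ^ n) \<le> r powi (k - 1) * (w n * B ^ n)"
      using assms(3) w_nonneg[of n] by (intro mult_left_mono power_mono) auto
    then show ?thesis
      using w_nonneg[of n] \<open>norm \<xi> = r\<close> by (simp add: f_def norm_mult norm_power norm_power_int mult_ac)
  qed
  have "summable (\<lambda>n. r powi (k - 1) * (w n * B ^ n))"
    using poisson_generating_function[of a B] by (intro summable_mult) (simp add: w_def sums_summable)
  from has_contour_integral_suminf_circlepath[OF assms(3) terms bound this]
  have series: "((\<lambda>\<xi>. \<Sum>n. f n \<xi>) has_contour_integral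
      (\<Sum>n. 2 * pi * \<i> * of_real (w n * second_class_pmf c n x))) (circlepath 0 r)" .
  have "(\<lambda>n. 2 * pi * \<i> * of_real (w n * second_class_pmf c n x)) sums
      (2 * pi * \<i> * of_real (proc_prob t c (\<lambda>c'. snd c' = x)))"
    unfolding proc by (intro sums_mult sums_of_real summable_sums law_summable)
  then have total: "(\<Sum>n. 2 * pi * \<i> * of_real (w n * second_class_pmf c n x)) =
      2 * pi * \<i> * proc_prob t c (\<lambda>c'. snd c' = x)"
    by (rule sums_unique[symmetric])
  show ?thesis
  proof (rule has_contour_integral_eq[OF series[unfolded total]])
    fix \<xi> :: complex
    assume "\<xi> \<in> path_image (circlepath 0 r)"
    then have "\<xi> \<noteq> 0"
      using assms(3) by auto
    have "(\<lambda>n. \<xi> powi (k - 1) * (of_real (w n) * walk_symbol N \<xi> ^ n)) sums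
        (\<xi> powi (k - 1) * exp (of_real a * (walk_symbol N \<xi> - 1)))"
      unfolding w_def by (intro sums_mult poisson_generating_function)
    moreover have "of_real a * (walk_symbol N \<xi> - 1) = (1 / (2 * \<xi>) + \<xi> / 2 - 1) * complex_of_real t"
      using \<open>N \<ge> 1\<close> \<open>\<xi> \<noteq> 0\<close> by (simp add: a_def walk_symbol_def field_simps)
    ultimately show "(\<Sum>n. f n \<xi>) =
        \<xi> powi (x - snd c - 1) * exp ((1 / (2 * \<xi>) + \<xi> / 2 - 1) * complex_of_real t)"
      by (simp add: f_def k_def mult_ac sums_unique[symmetric])
  qed
qed

lemma valid_config_initial:
  assumes "N \<ge> 1" and "\<And>i j. 1 \<le> i \<Longrightarrow> i < j \<Longrightarrow> j \<le> N \<Longrightarrow> y i < y j"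
  shows "valid_config N (y ` {1..<N}, y N)"
proof -
  have "strict_mono_on {1..N} y"
    using assms(2) by (auto simp: strict_mono_on_def)
  then have "inj_on y {1..<N}"
    by (rule strict_mono_on_imp_inj_on[THEN inj_on_subset]) auto
  moreover have "y N \<notin> y ` {1..<N}"
  proof
    assume "y N \<in> y ` {1..<N}"
    then obtain i where "i \<in> {1..<N}" "y N = y i"
      by auto
    then show False
      using assms(2)[of i N] by simp
  qed
  ultimately show ?thesis
    using assms(1) by (simp add: valid_config_def card_image)
qed

theorem corollary1p2:
  fixes N :: nat and y :: "nat \<Rightarrow> int" and t :: real and x :: int
  assumes "N \<ge> 1"
    and "\<And>i j. 1 \<le> i \<Longrightarrow> i < j \<Longrightarrow> j \<le> N \<Longrightarrow> y i < y j"
    and "t \<ge> 0"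
  shows "\<exists>r0>0. \<forall>r. 0 < r \<and> r < r0 \<longrightarrow>
    complex_of_real (proc_prob t (y ` {1..<N}, y N) (\<lambda>c. snd c = x)) =
      contour_integral (circlepath 0 r)
        (\<lambda>\<xi>. \<xi> powi (x - y N - 1) * exp ((1 / (2 * \<xi>) + \<xi> / 2 - 1) * complex_of_real t))
      / (2 * pi * \<i>)"
proof (intro exI[of _ 1] conjI allI impI)
  fix r :: real
  assume "0 < r \<and> r < 1"
  with valid_config_initial[OF assms(1,2)] assms(3)
  have "((\<lambda>\<xi>. \<xi> powi (x - y N - 1) * exp ((1 / (2 * \<xi>) + \<xi> / 2 - 1) * complex_of_real t))
      has_contour_integral 2 * pi * \<i> * proc_prob t (y ` {1..<N}, y N) (\<lambda>c. snd c = x)) (circlepath 0 r)"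
    using has_contour_integral_second_class_law by fastforce
  then show "complex_of_real (proc_prob t (y ` {1..<N}, y N) (\<lambda>c. snd c = x)) =
      contour_integral (circlepath 0 r)
        (\<lambda>\<xi>. \<xi> powi (x - y N - 1) * exp ((1 / (2 * \<xi>) + \<xi> / 2 - 1) * complex_of_real t))
      / (2 * pi * \<i>)"
    by (simp add: contour_integral_unique)
qed simp

end
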